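(* Let $0<\varepsilon_1<\varepsilon_2<1$ and let $\psi:[0,1]\to[0,1]$ be a strictly increasing continuous function with $\psi(\varepsilon_1)=\varepsilon_1$ and $\psi(\varepsilon_2)=\varepsilon_2$; write $\psi_1=\psi|_{[0,\varepsilon_1]}$, $\psi_2=\psi|_{[\varepsilon_1,\varepsilon_2]}$, $\psi_3=\psi|_{[\varepsilon_2,1]}$. Let $a_0=b_0=c_0=1$ and for $k\ge1$ define the $k$-fold integrals $$a_k=\Big\{{\varepsilon_1\atop 0},{\psi_1\atop 0},\dots,{\psi_1\atop 0}\Big\},\quad b_k=\Big\{{\varepsilon_2\atop \varepsilon_1},{\psi_2\atop \varepsilon_1},\dots,{\psi_2\atop \varepsilon_1}\Big\},$$ $$c_k=\Big\{{1\atop \varepsilon_2},{\psi_3\atop \varepsilon_2},\dots,{\psi_3\atop \varepsilon_2}\Big\},\quad d_k=\Big\{{1\atop 0},{\psi\atop 0},\dots,{\psi\atop 0}\Big\}.$$ Then for $n=1,2,\dots$, $$d_n=\sum_{k=0}^n c_k\sum_{l=0}^{n-k}b_l\,a_{n-k-l}.$$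
   Context: For functions (or constants) $\alpha_i,\beta_i$, the symbol $\Big\{{\alpha_1\atop\beta_1},\dots,{\alpha_n\atop\beta_n}\Big\}$ denotes the iterated integral $\int_{\beta_1}^{\alpha_1}\int_{\beta_2(x_1)}^{\alpha_2(x_1)}\cdots\int_{\beta_n(x_{n-1})}^{\alpha_n(x_{n-1})}dx_n\cdots dx_1$ (here the first limits $\alpha_1,\beta_1$ are constants). In each of $a_k,b_k,c_k,d_k$ there are $k$ entries, the first one being the constant-limit entry shown and the remaining $k-1$ entries being the repeated entry shown. *)

theory Defs
  imports "HOL-Analysis.Analysis"
begin

definition oint :: "real \<Rightarrow> real \<Rightarrow> (real \<Rightarrow> real) \<Rightarrow> real" where
  "oint lo hi f = (if lo \<le> hi then integral {lo..hi} f else - integral {hi..lo} f)"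

text \<open>Inner part of the iterated integral with the repeated entry (alpha over beta):
  itint_inner alpha beta m x is the m-fold integral over x_2..x_{m+1} given the
  outer variable x, with limits beta(x_{j-1}) .. alpha(x_{j-1}).\<close>
fun itint_inner :: "(real \<Rightarrow> real) \<Rightarrow> (real \<Rightarrow> real) \<Rightarrow> nat \<Rightarrow> real \<Rightarrow> real" where
  "itint_inner \<alpha> \<beta> 0 = (\<lambda>x. 1)"
| "itint_inner \<alpha> \<beta> (Suc m) = (\<lambda>x. oint (\<beta> x) (\<alpha> x) (itint_inner \<alpha> \<beta> m))"

definition itint :: "real \<Rightarrow> real \<Rightarrow> (real \<Rightarrow> real) \<Rightarrow> (real \<Rightarrow> real) \<Rightarrow> nat \<Rightarrow> real" where
  "itint A B \<alpha> \<beta> k = (if k = 0 then 1 else oint B A (itint_inner \<alpha> \<beta> (k - 1)))"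

end

theory Submission
  imports Defs
begin

text \<open>Splitting the range of the outermost variable of \<open>d\<^sub>n\<close> at \<open>\<epsilon>\<^sub>2\<close>: the part
  below \<open>\<epsilon>\<^sub>2\<close> is an iterated integral over \<open>[0,\<epsilon>\<^sub>2]\<close>, and above \<open>\<epsilon>\<^sub>2\<close> the integrand
  (an iterated integral with upper limit \<open>\<psi> x \<ge> \<epsilon>\<^sub>2\<close>) is, by induction on the order, a
  convolution of such lower-order pieces with the \<open>c\<^sub>k\<close>-type integrals; integrating
  raises the order of the latter. This works because \<open>\<psi>\<close> maps \<open>[\<epsilon>\<^sub>2,1]\<close> into itself.
  The same splitting at \<open>\<epsilon>\<^sub>1\<close> expands the integrals over \<open>[0,\<epsilon>\<^sub>2]\<close> into the \<open>b\<^sub>l\<close>, \<open>a\<^sub>m\<close>.\<close>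

text \<open>The inner integrals are outer ones with upper limit \<open>\<psi> x\<close>, so one induction over
  the upper limit covers both.\<close>

lemma itint_inner_eq_itint:
  "itint_inner \<psi> (\<lambda>_. c) k x = itint (\<psi> x) c \<psi> (\<lambda>_. c) k"
  by (cases k) (simp_all add: itint_def)

lemma itint_0 [simp]: "itint A B \<alpha> \<beta> 0 = 1"
  by (simp add: itint_def)

lemma itint_Suc:
  assumes "lo \<le> A"
  shows "itint A lo \<psi> (\<lambda>_. lo) (Suc m) = integral {lo..A} (itint_inner \<psi> (\<lambda>_. lo) m)"
  using assms by (simp add: oint_def itint_def)

lemma continuous_on_itint_inner:
  assumes cont: "continuous_on {lo..hi} \<psi>"
    and maps: "\<And>x. x \<in> {lo..hi} \<Longrightarrow> \<psi> x \<in> {lo..hi}"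
  shows "continuous_on {lo..hi} (itint_inner \<psi> (\<lambda>_. lo) m)"
proof (induction m)
  case 0
  then show ?case by simp
next
  case (Suc m)
  let ?I = "\<lambda>t. integral {lo..t} (itint_inner \<psi> (\<lambda>_. lo) m)"
  have "continuous_on {lo..hi} ?I"
    using Suc integrable_continuous_interval indefinite_integral_continuous_1 by blast
  then have "continuous_on {lo..hi} (?I \<circ> \<psi>)"
    using maps by (intro continuous_on_compose[OF cont]) (auto elim: continuous_on_subset)
  then show ?case
    by (rule continuous_on_eq) (use maps in \<open>auto simp: oint_def\<close>)
qed

lemma itint_split:
  fixes lo mid hi A :: real
  assumes "lo \<le> mid"
    and cont: "continuous_on {lo..hi} \<psi>"
    and maps: "\<And>x. x \<in> {lo..hi} \<Longrightarrow> \<psi> x \<in> {lo..hi}"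
    and maps_upper: "\<And>x. x \<in> {mid..hi} \<Longrightarrow> mid \<le> \<psi> x"
    and "A \<in> {mid..hi}"
  shows "itint A lo \<psi> (\<lambda>_. lo) n =
    (\<Sum>l=0..n. itint A mid \<psi> (\<lambda>_. mid) l * itint mid lo \<psi> (\<lambda>_. lo) (n - l))"
  using \<open>A \<in> {mid..hi}\<close>
proof (induction n arbitrary: A)
  case 0
  then show ?case by simp
next
  case (Suc k)
  define F where "F = itint_inner \<psi> (\<lambda>_. lo) k"
  define G where "G = itint_inner \<psi> (\<lambda>_. mid)"
  define a where "a = itint mid lo \<psi> (\<lambda>_. lo)"
  have A: "mid \<le> A" "A \<le> hi" using Suc.prems by auto
  have F_eq: "F y = (\<Sum>l=0..k. G l y * a (k - l))" if "y \<in> {mid..hi}" for y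
    using Suc.IH[of "\<psi> y"] maps maps_upper that \<open>lo \<le> mid\<close>
    unfolding F_def G_def a_def itint_inner_eq_itint by fastforce
  have "continuous_on {lo..A} F"
    unfolding F_def using continuous_on_itint_inner[of lo hi \<psi> k] cont maps A
    by (auto elim: continuous_on_subset)
  then have F_int: "F integrable_on {lo..A}"
    by (rule integrable_continuous_interval)
  have "continuous_on {mid..A} (G l)" for l
    unfolding G_def
    using continuous_on_itint_inner[of mid hi \<psi>] continuous_on_subset[OF cont] maps maps_upper A
      \<open>lo \<le> mid\<close>
    by (fastforce elim: continuous_on_subset)
  then have G_int: "G l integrable_on {mid..A}" for l
    by (rule integrable_continuous_interval)
  have "itint A lo \<psi> (\<lambda>_. lo) (Suc k) = integral {lo..A} F"
    unfolding F_def using A \<open>lo \<le> mid\<close> by (simp add: itint_Suc)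
  also have "\<dots> = integral {lo..mid} F + integral {mid..A} F"
    using Henstock_Kurzweil_Integration.integral_combine[OF \<open>lo \<le> mid\<close> \<open>mid \<le> A\<close> F_int] by simp
  also have "integral {mid..A} F = integral {mid..A} (\<lambda>y. \<Sum>l=0..k. G l y * a (k - l))"
    using F_eq A by (intro integral_cong) auto
  also have "\<dots> = (\<Sum>l=0..k. integral {mid..A} (G l) * a (k - l))"
    using G_int by (simp add: integral_sum integrable_on_mult_left)
  also have "\<dots> = (\<Sum>l=0..k. itint A mid \<psi> (\<lambda>_. mid) (Suc l) * a (k - l))"
    unfolding G_def using A by (simp add: itint_Suc)
  also have "integral {lo..mid} F = a (Suc k)"
    unfolding a_def F_def using \<open>lo \<le> mid\<close> by (simp add: itint_Suc)
  finally show ?case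
    unfolding a_def by (subst sum.atLeast0_atMost_Suc_shift) simp
qed

theorem lemma4p4:
  fixes \<epsilon>1 \<epsilon>2 :: real and \<psi> :: "real \<Rightarrow> real" and n :: nat
  assumes "0 < \<epsilon>1" and "\<epsilon>1 < \<epsilon>2" and "\<epsilon>2 < 1"
    and "\<psi> ` {0..1} \<subseteq> {0..1}"
    and "strict_mono_on {0..1} \<psi>"
    and "continuous_on {0..1} \<psi>"
    and "\<psi> \<epsilon>1 = \<epsilon>1" and "\<psi> \<epsilon>2 = \<epsilon>2"
    and "n \<ge> 1"
  shows "itint 1 0 \<psi> (\<lambda>_. 0) n =
    (\<Sum>k=0..n. itint 1 \<epsilon>2 \<psi> (\<lambda>_. \<epsilon>2) k *
       (\<Sum>l=0..n-k. itint \<epsilon>2 \<epsilon>1 \<psi> (\<lambda>_. \<epsilon>1) l * itint \<epsilon>1 0 \<psi> (\<lambda>_. 0) (n - k - l)))"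
proof -
  have maps: "\<psi> x \<in> {0..1}" if "x \<in> {0..1}" for x
    using assms(4) that by blast
  have fixed_le: "e \<le> \<psi> x" if "\<psi> e = e" "e \<in> {0..1}" "x \<in> {e..1}" for e x
    using assms(5) that by (metis atLeastAtMost_iff order.order_iff_strict order_trans strict_mono_onD)
  have split_at: "itint A 0 \<psi> (\<lambda>_. 0) m =
      (\<Sum>l=0..m. itint A e \<psi> (\<lambda>_. e) l * itint e 0 \<psi> (\<lambda>_. 0) (m - l))"
    if "\<psi> e = e" "e \<in> {0..1}" "A \<in> {e..1}" for e A m
    using that by (intro itint_split[OF _ assms(6) maps]) (auto intro: fixed_le)
  show ?thesis
    using split_at[of \<epsilon>2 1 n] split_at[of \<epsilon>1 \<epsilon>2] assms(1-3,7,8) by simp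
qed

end
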